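(* Let $A\in\mathbb{R}^{n\times n}$ be nonsingular, $B\in\mathbb{R}^{n\times p}$, $C\in\mathbb{R}^{q\times n}$, and $X_0=O$. For $k=0,1,2,\dots$ suppose $A-X_kBB^T$ is nonsingular, let $\widetilde X_{k+1}=W_{k+1}\widetilde Y^{(k+1)}W_{k+1}^T$ be an approximate solution computed by EKSM of $$(A-X_kBB^T)X+X(A-X_kBB^T)^T=-X_kBB^TX_k-C^TC,$$ where the columns of $W_{k+1}$ form an orthonormal basis of $\mathbf{EK}^\square_{m_{k+1}}(A-X_kBB^T,[C^T,X_kB])$, set $Z_k=\widetilde X_{k+1}-X_k$, and define $X_{k+1}=X_k+\lambda_kZ_k$ for some step size $\lambda_k>0$. Then for every $k\ge0$, $$\mathrm{Range}(X_{k+1})\subseteq\mathbf{EK}^\square_{\bar m_{k+1}}(A,C^T)$$ for some integer $\bar m_{k+1}\le\sum_{j=1}^{k+1}m_j+2$; in particular, whenever $X_{k+1}=P_{k+1}P_{k+1}^T$ is a low-rank factorization, $\mathrm{Range}(P_{k+1})\subseteq \mathbf{EK}^\square_{\bar m_{k+1}}(A,C^T)$.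
   Context: For a nonsingular $M\in\mathbb{R}^{n\times n}$ and $G\in\mathbb{R}^{n\times s}$, the block extended Krylov subspace is $\mathbf{EK}^\square_m(M,G)=\mathrm{Range}([G,M^{-1}G,MG,M^{-2}G,\dots,M^{m-1}G,M^{-m}G])$. "Solving the Lyapunov equation $MX+XM^T+GG^T=0$ by EKSM" means computing an approximate solution of the form $VYV^T$, where the columns of $V$ form an orthonormal basis of $\mathbf{EK}^\square_m(M,G)$ for some $m$ and $Y$ is a small square matrix. *)

theory Defs
  imports "Jordan_Normal_Form.Gauss_Jordan_Elimination"
begin

definition mat_range :: "real mat \<Rightarrow> real vec set" where
  "mat_range M = {M *\<^sub>v x | x. x \<in> carrier_vec (dim_col M)}"

definition minv :: "real mat \<Rightarrow> real mat" where
  "minv M = the (mat_inverse M)"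

definition hcat :: "real mat \<Rightarrow> real mat \<Rightarrow> real mat" where
  "hcat G H = mat_of_cols (dim_row G) (cols G @ cols H)"

(* block extended Krylov matrix [G, M^{-1}G, MG, M^{-2}G, ..., M^{m-1}G, M^{-m}G] *)
definition EK_mat :: "nat \<Rightarrow> real mat \<Rightarrow> real mat \<Rightarrow> real mat" where
  "EK_mat m M G = mat_of_cols (dim_row G)
     (concat (map (\<lambda>j. cols ((M ^\<^sub>m j) * G) @ cols ((minv M ^\<^sub>m (Suc j)) * G)) [0..<m]))"

definition EK :: "nat \<Rightarrow> real mat \<Rightarrow> real mat \<Rightarrow> real vec set" where
  "EK m M G = mat_range (EK_mat m M G)"

definition orth_basis :: "nat \<Rightarrow> real mat \<Rightarrow> real vec set \<Rightarrow> bool" where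
  "orth_basis n W S \<longleftrightarrow> dim_row W = n \<and> W\<^sup>T * W = 1\<^sub>m (dim_col W) \<and> mat_range W = S"

end

theory Submission
  imports Defs
begin

text \<open>
  Write K(s) for the extended Krylov space EK s A C^T. Multiplication by A or by A^-1 maps
  K(s) into K(s+1), since it only shifts the block powers. If Range X is contained in K(s) and
  F = X B B^T, then M = A - F and M^-1 also map K(t) into K(t+1) for every t >= s:
  M v = A v - F v, and w = M^-1 v satisfies w = A^-1 v + A^-1 (F w) with F w in K(s).
  As Range [C^T, X B] lies in K(s) as well, the whole space EK m M [C^T, X B] lies in K(s+m),
  hence so does the update X + lambda (W Y W^T - X). By induction Range X_k lies in
  K(1 + m_1 + ... + m_k). Finally Range P = Range (P P^T): a vector orthogonal to
  Range (P P^T) is annihilated by P^T, and a column space is the orthogonal complement of its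
  orthogonal complement.
\<close>

section \<open>Column spaces\<close>

lemma mat_range_carrier: "A \<in> carrier_mat n k \<Longrightarrow> mat_range A \<subseteq> carrier_vec n"
  unfolding mat_range_def by auto

lemma mult_mat_vec_in_mat_range: "x \<in> carrier_vec (dim_col A) \<Longrightarrow> A *\<^sub>v x \<in> mat_range A"
  unfolding mat_range_def by blast

lemma set_cols_subset_mat_range: "set (cols A) \<subseteq> mat_range A"
proof
  fix c assume "c \<in> set (cols A)"
  then obtain j where "j < dim_col A" "c = col A j"
    by (auto simp: cols_def)
  then have "c = A *\<^sub>v unit_vec (dim_col A) j"
    by (intro eq_vecI) (auto simp: scalar_prod_right_unit)
  then show "c \<in> mat_range A"
    by (simp add: mult_mat_vec_in_mat_range)
qed

lemma zero_in_mat_range: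
  assumes "A \<in> carrier_mat n k"
  shows "0\<^sub>v n \<in> mat_range A"
proof -
  have "A *\<^sub>v 0\<^sub>v k = 0\<^sub>v n"
    using assms by (intro eq_vecI) auto
  then show ?thesis
    using assms mult_mat_vec_in_mat_range[of "0\<^sub>v k" A] by simp
qed

lemma add_in_mat_range:
  assumes A: "A \<in> carrier_mat n k" and "u \<in> mat_range A" "v \<in> mat_range A"
  shows "u + v \<in> mat_range A"
proof -
  obtain x y where "x \<in> carrier_vec k" "y \<in> carrier_vec k" "u = A *\<^sub>v x" "v = A *\<^sub>v y"
    using assms unfolding mat_range_def by auto
  then show ?thesis
    using A mult_mat_vec_in_mat_range[of "x + y" A] by (simp add: mult_add_distrib_mat_vec)
qed

lemma smult_in_mat_range:
  assumes A: "A \<in> carrier_mat n k" and "u \<in> mat_range A"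
  shows "c \<cdot>\<^sub>v u \<in> mat_range A"
proof -
  obtain x where "x \<in> carrier_vec k" "u = A *\<^sub>v x"
    using assms unfolding mat_range_def by auto
  then show ?thesis
    using A mult_mat_vec_in_mat_range[of "c \<cdot>\<^sub>v x" A] by (simp add: mult_mat_vec)
qed

lemma minus_in_mat_range:
  assumes A: "A \<in> carrier_mat n k" and "u \<in> mat_range A" "v \<in> mat_range A"
  shows "u - v \<in> mat_range A"
proof -
  obtain x y where "x \<in> carrier_vec k" "y \<in> carrier_vec k" "u = A *\<^sub>v x" "v = A *\<^sub>v y"
    using assms unfolding mat_range_def by auto
  then show ?thesis
    using A mult_mat_vec_in_mat_range[of "x - y" A] by (simp add: mult_minus_distrib_mat_vec)
qed

lemma mat_range_mult:
  assumes "M \<in> carrier_mat n' n" "N \<in> carrier_mat n k"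
  shows "mat_range (M * N) = (\<lambda>v. M *\<^sub>v v) ` mat_range N"
proof
  show "mat_range (M * N) \<subseteq> (\<lambda>v. M *\<^sub>v v) ` mat_range N"
    using assms unfolding mat_range_def by auto
  show "(\<lambda>v. M *\<^sub>v v) ` mat_range N \<subseteq> mat_range (M * N)"
  proof
    fix u assume "u \<in> (\<lambda>v. M *\<^sub>v v) ` mat_range N"
    then obtain x where "x \<in> carrier_vec k" "u = M *\<^sub>v (N *\<^sub>v x)"
      using assms unfolding mat_range_def by auto
    then show "u \<in> mat_range (M * N)"
      using assms mult_mat_vec_in_mat_range[of x "M * N"] by simp
  qed
qed

lemma mat_range_mult_subset:
  assumes "M \<in> carrier_mat n k" "N \<in> carrier_mat k l"
  shows "mat_range (M * N) \<subseteq> mat_range M"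
  using assms unfolding mat_range_def by fastforce

lemma mat_range_zero_mat_subset:
  assumes "E \<in> carrier_mat n r"
  shows "mat_range (0\<^sub>m n k) \<subseteq> mat_range E"
proof
  fix v assume "v \<in> mat_range (0\<^sub>m n k)"
  then obtain x where "x \<in> carrier_vec k" "v = 0\<^sub>m n k *\<^sub>v x"
    unfolding mat_range_def by auto
  then have "v = 0\<^sub>v n"
    by (intro eq_vecI) auto
  then show "v \<in> mat_range E"
    using zero_in_mat_range[OF assms] by simp
qed

lemma mat_range_subset_iff_cols:
  assumes E: "E \<in> carrier_mat n r" and M: "M \<in> carrier_mat n k"
  shows "mat_range M \<subseteq> mat_range E \<longleftrightarrow> set (cols M) \<subseteq> mat_range E"
proof
  assume "mat_range M \<subseteq> mat_range E"
  then show "set (cols M) \<subseteq> mat_range E"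
    using set_cols_subset_mat_range by blast
next
  assume "set (cols M) \<subseteq> mat_range E"
  then have "\<forall>j<k. \<exists>y \<in> carrier_vec r. col M j = E *\<^sub>v y"
    using E M unfolding mat_range_def cols_def by fastforce
  then obtain y where y: "\<And>j. j < k \<Longrightarrow> y j \<in> carrier_vec r \<and> col M j = E *\<^sub>v y j"
    by metis
  define F where "F = mat_of_cols r (map y [0..<k])"
  have F: "F \<in> carrier_mat r k"
    unfolding F_def using mat_of_cols_carrier(1)[of r "map y [0..<k]"] by simp
  have "M = E * F"
    by (rule mat_col_eqI) (use E M F y in \<open>auto simp: F_def\<close>)
  then show "mat_range M \<subseteq> mat_range E"
    using mat_range_mult_subset[OF E F] by simp
qed

lemma image_mat_range_subset_iff_cols:
  assumes L: "L \<in> carrier_mat n' n" and N: "N \<in> carrier_mat n k" and E: "E \<in> carrier_mat n' r"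
  shows "(\<lambda>v. L *\<^sub>v v) ` mat_range N \<subseteq> mat_range E
    \<longleftrightarrow> (\<lambda>v. L *\<^sub>v v) ` set (cols N) \<subseteq> mat_range E"
proof -
  have "set (cols (L * N)) = (\<lambda>v. L *\<^sub>v v) ` set (cols N)"
    using L N by (force simp: cols_def)
  then show ?thesis
    using mat_range_subset_iff_cols[OF E mult_carrier_mat[OF L N]] mat_range_mult[OF L N]
    by simp
qed

lemma mat_range_add_subset:
  assumes E: "E \<in> carrier_mat n r" and P: "P \<in> carrier_mat n k" and Q: "Q \<in> carrier_mat n k"
    and PE: "mat_range P \<subseteq> mat_range E" and QE: "mat_range Q \<subseteq> mat_range E"
  shows "mat_range (P + Q) \<subseteq> mat_range E"
proof
  fix v assume "v \<in> mat_range (P + Q)"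
  then obtain x where x: "x \<in> carrier_vec k" "v = P *\<^sub>v x + Q *\<^sub>v x"
    using P Q unfolding mat_range_def by (auto simp: add_mult_distrib_mat_vec)
  moreover have "P *\<^sub>v x \<in> mat_range E" "Q *\<^sub>v x \<in> mat_range E"
    using P Q PE QE x mult_mat_vec_in_mat_range[of x P] mult_mat_vec_in_mat_range[of x Q] by auto
  ultimately show "v \<in> mat_range E"
    using add_in_mat_range[OF E] by simp
qed

lemma mat_range_minus_subset:
  assumes E: "E \<in> carrier_mat n r" and P: "P \<in> carrier_mat n k" and Q: "Q \<in> carrier_mat n k"
    and PE: "mat_range P \<subseteq> mat_range E" and QE: "mat_range Q \<subseteq> mat_range E"
  shows "mat_range (P - Q) \<subseteq> mat_range E"
proof
  fix v assume "v \<in> mat_range (P - Q)"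
  then obtain x where x: "x \<in> carrier_vec k" "v = P *\<^sub>v x - Q *\<^sub>v x"
    using P Q unfolding mat_range_def by (auto simp: minus_mult_distrib_mat_vec)
  moreover have "P *\<^sub>v x \<in> mat_range E" "Q *\<^sub>v x \<in> mat_range E"
    using P Q PE QE x mult_mat_vec_in_mat_range[of x P] mult_mat_vec_in_mat_range[of x Q] by auto
  ultimately show "v \<in> mat_range E"
    using minus_in_mat_range[OF E] by simp
qed

lemma mat_range_smult_subset:
  assumes E: "E \<in> carrier_mat n r" and P: "P \<in> carrier_mat n k"
    and PE: "mat_range P \<subseteq> mat_range E"
  shows "mat_range (c \<cdot>\<^sub>m P) \<subseteq> mat_range E"
proof
  fix v assume "v \<in> mat_range (c \<cdot>\<^sub>m P)"
  then obtain x where x: "x \<in> carrier_vec k" "v = (c \<cdot>\<^sub>m P) *\<^sub>v x"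
    using P unfolding mat_range_def by auto
  then have "v = c \<cdot>\<^sub>v (P *\<^sub>v x)"
    using P by (intro eq_vecI) (auto simp: scalar_prod_def sum_distrib_left ac_simps)
  moreover have "P *\<^sub>v x \<in> mat_range E"
    using P PE x mult_mat_vec_in_mat_range[of x P] by auto
  ultimately show "v \<in> mat_range E"
    using smult_in_mat_range[OF E] by simp
qed

lemma mat_range_hcat_subset:
  assumes E: "E \<in> carrier_mat n r" and P: "P \<in> carrier_mat n k" and Q: "Q \<in> carrier_mat n l"
    and PE: "mat_range P \<subseteq> mat_range E" and QE: "mat_range Q \<subseteq> mat_range E"
  shows "hcat P Q \<in> carrier_mat n (k + l)" and "mat_range (hcat P Q) \<subseteq> mat_range E"
proof -
  have PQ: "hcat P Q = mat_of_cols n (cols P @ cols Q)"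
    using P unfolding hcat_def by simp
  show carrier: "hcat P Q \<in> carrier_mat n (k + l)"
    using P Q mat_of_cols_carrier(1)[of n "cols P @ cols Q"] unfolding PQ by simp
  have "cols (hcat P Q) = cols P @ cols Q"
    using P Q cols_dim[of P] cols_dim[of Q] unfolding PQ by (intro cols_mat_of_cols) auto
  then show "mat_range (hcat P Q) \<subseteq> mat_range E"
    using mat_range_subset_iff_cols[OF E carrier] mat_range_subset_iff_cols[OF E P]
      mat_range_subset_iff_cols[OF E Q] PE QE by simp
qed

section \<open>Range of \<open>P P\<^sup>T\<close>\<close>

text \<open>For \<open>e = 0\<close> the division by zero makes \<open>vec_reject e w = w\<close>.\<close>

definition vec_reject :: "real vec \<Rightarrow> real vec \<Rightarrow> real vec" where
  "vec_reject e w = w - ((w \<bullet> e) / (e \<bullet> e)) \<cdot>\<^sub>v e"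

lemma vec_reject_carrier:
  "e \<in> carrier_vec n \<Longrightarrow> w \<in> carrier_vec n \<Longrightarrow> vec_reject e w \<in> carrier_vec n"
  unfolding vec_reject_def by simp

lemma scalar_prod_vec_reject_commute:
  assumes e: "e \<in> carrier_vec n" and w: "w \<in> carrier_vec n" and v: "v \<in> carrier_vec n"
  shows "vec_reject e w \<bullet> v = w \<bullet> vec_reject e v"
  using assms unfolding vec_reject_def
  by (simp add: minus_scalar_prod_distrib scalar_prod_minus_distrib comm_scalar_prod[of v n e])

lemma self_scalar_prod_eq_0_iff:
  "(v :: real vec) \<in> carrier_vec n \<Longrightarrow> v \<bullet> v = 0 \<longleftrightarrow> v = 0\<^sub>v n"
  using conjugate_square_eq_0_vec[of v n] by simp

lemma scalar_prod_vec_reject_self: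
  assumes e: "e \<in> carrier_vec n" and v: "v \<in> carrier_vec n"
  shows "e \<bullet> vec_reject e v = 0"
proof (cases "e \<bullet> e = 0")
  case True
  then show ?thesis
    using e v self_scalar_prod_eq_0_iff[OF e] vec_reject_carrier[OF e v] by simp
next
  case False
  then show ?thesis
    using e v unfolding vec_reject_def
    by (simp add: scalar_prod_minus_distrib comm_scalar_prod[of v n e])
qed

lemma in_mat_range_if_orthogonal_to_orthogonal_complement:
  assumes "set vs \<subseteq> carrier_vec n" "u \<in> carrier_vec n"
    and "\<And>v. v \<in> carrier_vec n \<Longrightarrow> \<forall>c \<in> set vs. c \<bullet> v = 0 \<Longrightarrow> u \<bullet> v = 0"
  shows "u \<in> mat_range (mat_of_cols n vs)"
  using assms
  \<comment> \<open>a Gram--Schmidt step: remove the first column from \<open>u\<close> and from the other columns\<close>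
proof (induction "length vs" arbitrary: vs u)
  case 0
  then have "u \<bullet> u = 0"
    by simp
  then have "u = 0\<^sub>v n"
    using self_scalar_prod_eq_0_iff[OF "0.prems"(2)] by simp
  then show ?case
    using zero_in_mat_range[OF mat_of_cols_carrier(1)] by simp
next
  case (Suc k)
  then obtain e vs' where evs: "vs = e # vs'"
    by (cases vs) auto
  define R where "R = mat_of_cols n (e # vs')"
  have e: "e \<in> carrier_vec n" and vs': "set vs' \<subseteq> carrier_vec n" and u: "u \<in> carrier_vec n"
    using Suc.prems[unfolded evs] by auto
  have R: "R \<in> carrier_mat n (Suc (length vs'))" and cols_R: "set (e # vs') \<subseteq> mat_range R"
    unfolding R_def using mat_of_cols_carrier(1)[of n "e # vs'"] set_cols_subset_mat_range
      cols_mat_of_cols[OF Suc.prems(1)[unfolded evs]] by (simp, metis)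
  have "vec_reject e u \<in> mat_range (mat_of_cols n (map (vec_reject e) vs'))"
  proof (rule Suc.hyps(1))
    fix v assume v: "v \<in> carrier_vec n"
      and orth: "\<forall>c \<in> set (map (vec_reject e) vs'). c \<bullet> v = 0"
    have "c \<bullet> vec_reject e v = 0" if "c \<in> set vs'" for c
      using orth that vs' scalar_prod_vec_reject_commute[OF e _ v, of c] by auto
    then have "\<forall>c \<in> set (e # vs'). c \<bullet> vec_reject e v = 0"
      using scalar_prod_vec_reject_self[OF e v] by auto
    then have "u \<bullet> vec_reject e v = 0"
      using Suc.prems(3)[unfolded evs] vec_reject_carrier[OF e v] by blast
    then show "vec_reject e u \<bullet> v = 0"
      using scalar_prod_vec_reject_commute[OF e u v] by simp
  qed (use Suc.hyps(2) e u vs' vec_reject_carrier evs in auto)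
  also have "mat_range (mat_of_cols n (map (vec_reject e) vs')) \<subseteq> mat_range R"
  proof -
    have "vec_reject e c \<in> mat_range R" if "c \<in> set vs'" for c
      unfolding vec_reject_def using that cols_R minus_in_mat_range[OF R] smult_in_mat_range[OF R]
      by (simp add: subset_iff)
    moreover have "set (map (vec_reject e) vs') \<subseteq> carrier_vec n"
      using vs' vec_reject_carrier[OF e] by auto
    ultimately show ?thesis
      using mat_range_subset_iff_cols[OF R mat_of_cols_carrier(1)] by auto
  qed
  finally have "vec_reject e u + ((u \<bullet> e) / (e \<bullet> e)) \<cdot>\<^sub>v e \<in> mat_range R"
    using add_in_mat_range[OF R] smult_in_mat_range[OF R] cols_R by simp
  moreover have "vec_reject e u + ((u \<bullet> e) / (e \<bullet> e)) \<cdot>\<^sub>v e = u"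
    unfolding vec_reject_def using e u by (intro eq_vecI) auto
  ultimately show ?case
    unfolding R_def evs by simp
qed

lemma mat_range_mult_transpose_self:
  assumes P: "P \<in> carrier_mat n k"
  shows "mat_range (P * P\<^sup>T) = mat_range P"
proof
  show "mat_range (P * P\<^sup>T) \<subseteq> mat_range P"
    using mat_range_mult_subset[OF P] P by simp
  show "mat_range P \<subseteq> mat_range (P * P\<^sup>T)"
  proof
    fix u assume "u \<in> mat_range P"
    then obtain x where x: "x \<in> carrier_vec k" and u: "u = P *\<^sub>v x"
      using P unfolding mat_range_def by auto
    have PPT: "P * P\<^sup>T \<in> carrier_mat n n"
      using P by simp
    have "u \<in> mat_range (mat_of_cols n (cols (P * P\<^sup>T)))"
    proof (rule in_mat_range_if_orthogonal_to_orthogonal_complement)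
      fix v assume v: "v \<in> carrier_vec n"
        and orth: "\<forall>c \<in> set (cols (P * P\<^sup>T)). c \<bullet> v = 0"
      have "(P * P\<^sup>T) *\<^sub>v v = 0\<^sub>v n"
      proof (rule eq_vecI)
        fix i assume i: "i < dim_vec (0\<^sub>v n)"
        then have "row (P * P\<^sup>T) i = col (P * P\<^sup>T) i"
          using P by (intro eq_vecI) (auto simp: comm_scalar_prod[of _ k])
        then show "((P * P\<^sup>T) *\<^sub>v v) $ i = 0\<^sub>v n $ i"
          using orth i P by (auto simp: cols_def)
      qed (use carrier_matD(1)[OF P] in simp)
      then have "(P\<^sup>T *\<^sub>v v) \<bullet> (P\<^sup>T *\<^sub>v v) = 0"
        using transpose_vec_mult_scalar[OF P _ v, of "P\<^sup>T *\<^sub>v v"] P v by simp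
      then have "P\<^sup>T *\<^sub>v v = 0\<^sub>v k"
        using self_scalar_prod_eq_0_iff[of "P\<^sup>T *\<^sub>v v" k] P v by simp
      then show "u \<bullet> v = 0"
        using transpose_vec_mult_scalar[OF P x v] comm_scalar_prod[of u n v] P x v u by simp
    qed (use P PPT x u cols_dim[of "P * P\<^sup>T"] in auto)
    then show "u \<in> mat_range (P * P\<^sup>T)"
      using PPT by (metis carrier_matD(1) mat_of_cols_cols)
  qed
qed

section \<open>Block extended Krylov spaces\<close>

lemma minv_mat:
  assumes A: "A \<in> carrier_mat n n" and inv: "invertible_mat A"
  shows "minv A \<in> carrier_mat n n" "A * minv A = 1\<^sub>m n" "minv A * A = 1\<^sub>m n"
proof -
  obtain B where B: "inverts_mat A B" "inverts_mat B A"
    using inv unfolding invertible_mat_def by auto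
  then have "B \<in> carrier_mat n n"
    using A unfolding inverts_mat_def
    by (metis carrier_matD carrier_matI index_mult_mat(2,3) index_one_mat(2,3))
  then have "A \<in> Units (ring_mat TYPE(real) n ())"
    using A B unfolding Units_def inverts_mat_def ring_mat_def by auto
  then obtain C where "mat_inverse A = Some C"
    using mat_inverse(1)[OF A] by fastforce
  then show "minv A \<in> carrier_mat n n" "A * minv A = 1\<^sub>m n" "minv A * A = 1\<^sub>m n"
    using mat_inverse(2)[OF A] unfolding minv_def by auto
qed

lemma pow_mat_Suc_left:
  assumes A: "A \<in> carrier_mat n n"
  shows "A ^\<^sub>m Suc k = A * A ^\<^sub>m k"
proof (induction k)
  case (Suc k)
  have "A ^\<^sub>m Suc (Suc k) = (A * A ^\<^sub>m k) * A"
    using Suc by simp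
  also have "\<dots> = A * (A ^\<^sub>m k * A)"
    using A by (simp add: assoc_mult_mat[of _ n n _ n _ n])
  finally show ?case
    by simp
qed (use A in simp)

lemma mult_pow_mat_mult:
  assumes "A \<in> carrier_mat n n" "G \<in> carrier_mat n l"
  shows "A * (A ^\<^sub>m j * G) = A ^\<^sub>m Suc j * G"
  unfolding pow_mat_Suc_left[OF assms(1)]
  using assoc_mult_mat[OF assms(1) pow_carrier_mat[OF assms(1)] assms(2)] by simp

lemma left_inverse_mult_pow_mat_mult:
  assumes A: "A \<in> carrier_mat n n" and B: "B \<in> carrier_mat n n" and BA: "B * A = 1\<^sub>m n"
    and G: "G \<in> carrier_mat n l"
  shows "B * (A ^\<^sub>m Suc j * G) = A ^\<^sub>m j * G"
proof -
  have "B * (A ^\<^sub>m Suc j * G) = B * (A * (A ^\<^sub>m j * G))"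
    using mult_pow_mat_mult[OF A G] by simp
  also have "\<dots> = (B * A) * (A ^\<^sub>m j * G)"
    using assoc_mult_mat[OF B A mult_carrier_mat[OF pow_carrier_mat[OF A] G]] by simp
  finally show ?thesis
    using A G BA by simp
qed

lemma
  assumes M: "M \<in> carrier_mat n n" "invertible_mat M" and G: "G \<in> carrier_mat n l"
  shows EK_mat_carrier: "EK_mat m M G \<in> carrier_mat n (dim_col (EK_mat m M G))"
    and set_cols_EK_mat: "set (cols (EK_mat m M G))
      = (\<Union>j<m. set (cols (M ^\<^sub>m j * G)) \<union> set (cols (minv M ^\<^sub>m Suc j * G)))"
proof -
  define vs where
    "vs = concat (map (\<lambda>j. cols (M ^\<^sub>m j * G) @ cols (minv M ^\<^sub>m Suc j * G)) [0..<m])"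
  have EK: "EK_mat m M G = mat_of_cols n vs"
    using G unfolding EK_mat_def vs_def by simp
  then show "EK_mat m M G \<in> carrier_mat n (dim_col (EK_mat m M G))"
    by simp
  have "set (cols (M ^\<^sub>m j * G)) \<subseteq> carrier_vec n"
    "set (cols (minv M ^\<^sub>m Suc j * G)) \<subseteq> carrier_vec n" for j
    using cols_dim[of "M ^\<^sub>m j * G"] cols_dim[of "minv M ^\<^sub>m Suc j * G"] M(1) minv_mat(1)[OF M]
    by (simp_all del: pow_mat.simps)
  then have "set vs \<subseteq> carrier_vec n"
    unfolding vs_def by auto
  then show "set (cols (EK_mat m M G))
      = (\<Union>j<m. set (cols (M ^\<^sub>m j * G)) \<union> set (cols (minv M ^\<^sub>m Suc j * G)))"
    unfolding EK vs_def by auto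
qed

lemma image_EK_subset_iff:
  assumes M: "M \<in> carrier_mat n n" "invertible_mat M" and G: "G \<in> carrier_mat n l"
    and L: "L \<in> carrier_mat n' n" and E: "E \<in> carrier_mat n' r"
  shows "(\<lambda>v. L *\<^sub>v v) ` EK m M G \<subseteq> mat_range E \<longleftrightarrow>
    (\<forall>j<m. (\<lambda>v. L *\<^sub>v v) ` mat_range (M ^\<^sub>m j * G) \<subseteq> mat_range E
      \<and> (\<lambda>v. L *\<^sub>v v) ` mat_range (minv M ^\<^sub>m Suc j * G) \<subseteq> mat_range E)"
proof -
  have blocks: "M ^\<^sub>m j * G \<in> carrier_mat n l" "minv M ^\<^sub>m Suc j * G \<in> carrier_mat n l" for j
    using M G minv_mat(1)[OF M] by auto
  show ?thesis
    unfolding EK_def image_mat_range_subset_iff_cols[OF L EK_mat_carrier[OF M G] E]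
      image_mat_range_subset_iff_cols[OF L blocks(1) E] image_mat_range_subset_iff_cols[OF L blocks(2) E]
      set_cols_EK_mat[OF M G]
    by blast
qed

lemma EK_subset_iff:
  assumes M: "M \<in> carrier_mat n n" "invertible_mat M" and G: "G \<in> carrier_mat n l"
    and E: "E \<in> carrier_mat n r"
  shows "EK m M G \<subseteq> mat_range E \<longleftrightarrow>
    (\<forall>j<m. mat_range (M ^\<^sub>m j * G) \<subseteq> mat_range E
      \<and> mat_range (minv M ^\<^sub>m Suc j * G) \<subseteq> mat_range E)"
proof -
  have blocks: "M ^\<^sub>m j * G \<in> carrier_mat n l" "minv M ^\<^sub>m Suc j * G \<in> carrier_mat n l" for j
    using M G minv_mat(1)[OF M] by auto
  have id: "(\<lambda>v. 1\<^sub>m n *\<^sub>v v) ` mat_range N = mat_range N" if "N \<in> carrier_mat n k" for N k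
    using mat_range_mult[OF one_carrier_mat that] that by simp
  show ?thesis
    using image_EK_subset_iff[OF M G one_carrier_mat E, of m]
    unfolding EK_def id[OF EK_mat_carrier[OF M G]] id[OF blocks(1)] id[OF blocks(2)] .
qed

section \<open>Shifting the Krylov spaces of \<open>A\<close>\<close>

context
  fixes A G :: "real mat" and n l :: nat
  assumes A: "A \<in> carrier_mat n n" "invertible_mat A" and G: "G \<in> carrier_mat n l"
begin

lemma block_subset_EK:
  assumes "j < s"
  shows "mat_range (A ^\<^sub>m j * G) \<subseteq> EK s A G"
    and "mat_range (minv A ^\<^sub>m Suc j * G) \<subseteq> EK s A G"
  using EK_subset_iff[OF A G EK_mat_carrier[OF A G], of s s] assms unfolding EK_def by auto

lemma EK_mono:
  assumes "s \<le> t"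
  shows "EK s A G \<subseteq> EK t A G"
  unfolding EK_subset_iff[OF A G EK_mat_carrier[OF A G], of s t, folded EK_def]
  using assms block_subset_EK by auto

lemma mat_range_subset_EK:
  assumes "0 < s"
  shows "mat_range G \<subseteq> EK s A G"
  using block_subset_EK(1)[OF assms] A G by simp

lemma mult_EK_subset_EK_Suc: "(\<lambda>v. A *\<^sub>v v) ` EK s A G \<subseteq> EK (Suc s) A G"
proof -
  note Ainv = minv_mat[OF A]
  have powers: "(\<lambda>v. A *\<^sub>v v) ` mat_range (A ^\<^sub>m j * G) \<subseteq> EK (Suc s) A G" if "j < s" for j
    using mat_range_mult[OF A(1) mult_carrier_mat[OF pow_carrier_mat[OF A(1)] G], of j]
      mult_pow_mat_mult[OF A(1) G] block_subset_EK(1)[of "Suc j" "Suc s"] that by simp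
  have inverse_powers: "(\<lambda>v. A *\<^sub>v v) ` mat_range (minv A ^\<^sub>m Suc j * G) \<subseteq> EK (Suc s) A G"
    if "j < s" for j
  proof -
    have "(\<lambda>v. A *\<^sub>v v) ` mat_range (minv A ^\<^sub>m Suc j * G) = mat_range (minv A ^\<^sub>m j * G)"
      using mat_range_mult[OF A(1) mult_carrier_mat[OF pow_carrier_mat[OF Ainv(1)] G], of "Suc j"]
        left_inverse_mult_pow_mat_mult[OF Ainv(1) A(1) Ainv(2) G] by simp
    also have "\<dots> \<subseteq> EK (Suc s) A G"
    proof (cases j)
      case 0
      then show ?thesis
        using mat_range_subset_EK[of "Suc s"] G Ainv(1) by simp
    next
      case (Suc i)
      then show ?thesis
        using that block_subset_EK(2)[of i "Suc s"] by simp
    qed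
    finally show ?thesis .
  qed
  show ?thesis
    unfolding EK_def[of "Suc s"] image_EK_subset_iff[OF A G A(1) EK_mat_carrier[OF A G]]
    using powers inverse_powers by (simp add: EK_def)
qed

lemma minv_mult_EK_subset_EK_Suc: "(\<lambda>v. minv A *\<^sub>v v) ` EK s A G \<subseteq> EK (Suc s) A G"
proof -
  note Ainv = minv_mat[OF A]
  have powers: "(\<lambda>v. minv A *\<^sub>v v) ` mat_range (A ^\<^sub>m j * G) \<subseteq> EK (Suc s) A G" if "j < s" for j
  proof (cases j)
    case 0
    then show ?thesis
      using mat_range_mult[OF Ainv(1) G] block_subset_EK(2)[of 0 "Suc s"] A G Ainv(1) by simp
  next
    case (Suc i)
    then show ?thesis
      using mat_range_mult[OF Ainv(1) mult_carrier_mat[OF pow_carrier_mat[OF A(1)] G], of j]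
        left_inverse_mult_pow_mat_mult[OF A(1) Ainv(1) Ainv(3) G] block_subset_EK(1)[of i "Suc s"] that
      by simp
  qed
  have inverse_powers:
    "(\<lambda>v. minv A *\<^sub>v v) ` mat_range (minv A ^\<^sub>m Suc j * G) \<subseteq> EK (Suc s) A G" if "j < s" for j
    using mat_range_mult[OF Ainv(1) mult_carrier_mat[OF pow_carrier_mat[OF Ainv(1)] G], of "Suc j"]
      mult_pow_mat_mult[OF Ainv(1) G] block_subset_EK(2)[of "Suc j" "Suc s"] that
    by (simp del: pow_mat.simps(2))
  show ?thesis
    unfolding EK_def[of "Suc s"] image_EK_subset_iff[OF A G Ainv(1) EK_mat_carrier[OF A G]]
    using powers inverse_powers by (simp add: EK_def)
qed

lemma mat_range_pow_mult_subset_EK: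
  assumes T: "T \<in> carrier_mat n n"
    and shift: "\<And>t. s \<le> t \<Longrightarrow> (\<lambda>v. T *\<^sub>v v) ` EK t A G \<subseteq> EK (Suc t) A G"
    and N: "N \<in> carrier_mat n k" "mat_range N \<subseteq> EK t A G" and st: "s \<le> t"
  shows "mat_range (T ^\<^sub>m j * N) \<subseteq> EK (t + j) A G"
  using N st
proof (induction j arbitrary: t N)
  case 0
  then show ?case
    using T by simp
next
  case (Suc j)
  have "T ^\<^sub>m Suc j * N = T ^\<^sub>m j * (T * N)"
    using T Suc.prems(1) by (simp add: assoc_mult_mat[of _ n n T n N k])
  moreover have "mat_range (T * N) \<subseteq> EK (Suc t) A G"
    using mat_range_mult[OF T Suc.prems(1)] Suc.prems(2) shift[OF Suc.prems(3)] by auto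
  ultimately show ?case
    using Suc.IH[of "T * N" "Suc t"] T Suc.prems by simp
qed

lemma EK_subset_EK_of_shifts:
  assumes M: "M \<in> carrier_mat n n" "invertible_mat M"
    and G': "G' \<in> carrier_mat n l'" "mat_range G' \<subseteq> EK s A G"
    and shift: "\<And>t. s \<le> t \<Longrightarrow> (\<lambda>v. M *\<^sub>v v) ` EK t A G \<subseteq> EK (Suc t) A G"
      "\<And>t. s \<le> t \<Longrightarrow> (\<lambda>v. minv M *\<^sub>v v) ` EK t A G \<subseteq> EK (Suc t) A G"
  shows "EK m M G' \<subseteq> EK (s + m) A G"
proof -
  have "mat_range (M ^\<^sub>m j * G') \<subseteq> EK (s + m) A G"
    and "mat_range (minv M ^\<^sub>m Suc j * G') \<subseteq> EK (s + m) A G" if "j < m" for j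
    using mat_range_pow_mult_subset_EK[where s = s and t = s and j = j, OF M(1) shift(1) G']
      mat_range_pow_mult_subset_EK[where s = s and t = s and j = "Suc j",
        OF minv_mat(1)[OF M] shift(2) G']
      EK_mono[of "s + j" "s + m"] EK_mono[of "s + Suc j" "s + m"] that
    by auto
  then show ?thesis
    unfolding EK_def[of "s + m"] EK_subset_iff[OF M G'(1) EK_mat_carrier[OF A G]] by simp
qed

lemma EK_carrier: "EK t A G \<subseteq> carrier_vec n"
  unfolding EK_def using mat_range_carrier[OF EK_mat_carrier[OF A G]] .

lemma perturbed_mult_EK_subset_EK_Suc:
  assumes F: "F \<in> carrier_mat n n" "mat_range F \<subseteq> EK s A G"
    and inv: "invertible_mat (A - F)" and st: "s \<le> t"
  shows "(\<lambda>v. (A - F) *\<^sub>v v) ` EK t A G \<subseteq> EK (Suc t) A G"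
    and "(\<lambda>v. minv (A - F) *\<^sub>v v) ` EK t A G \<subseteq> EK (Suc t) A G"
proof -
  note Ainv = minv_mat[OF A]
  have AF: "A - F \<in> carrier_mat n n"
    using F(1) by (rule minus_carrier_mat)
  note AFinv = minv_mat[OF AF inv]
  have F_in: "F *\<^sub>v w \<in> EK t A G" if "w \<in> carrier_vec n" for w
    using mult_mat_vec_in_mat_range[of w F] F EK_mono[OF st] that by auto
  note add_in_K = add_in_mat_range[OF EK_mat_carrier[OF A G, of "Suc t"], folded EK_def]
  note minus_in_K = minus_in_mat_range[OF EK_mat_carrier[OF A G, of "Suc t"], folded EK_def]
  show "(\<lambda>v. (A - F) *\<^sub>v v) ` EK t A G \<subseteq> EK (Suc t) A G"
  proof (rule image_subsetI)
    fix v assume v: "v \<in> EK t A G"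
    then have "v \<in> carrier_vec n"
      using EK_carrier by auto
    then have "(A - F) *\<^sub>v v = A *\<^sub>v v - F *\<^sub>v v"
      using A F by (simp add: minus_mult_distrib_mat_vec)
    moreover have "A *\<^sub>v v \<in> EK (Suc t) A G" "F *\<^sub>v v \<in> EK (Suc t) A G"
      using v mult_EK_subset_EK_Suc F_in[OF \<open>v \<in> carrier_vec n\<close>] EK_mono[of t "Suc t"] by auto
    ultimately show "(A - F) *\<^sub>v v \<in> EK (Suc t) A G"
      using minus_in_K by simp
  qed
  show "(\<lambda>v. minv (A - F) *\<^sub>v v) ` EK t A G \<subseteq> EK (Suc t) A G"
  proof (rule image_subsetI)
    fix v assume v: "v \<in> EK t A G"
    then have v_carrier: "v \<in> carrier_vec n"
      using EK_carrier by auto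
    define w where "w = minv (A - F) *\<^sub>v v"
    have w: "w \<in> carrier_vec n"
      unfolding w_def using AFinv(1) v_carrier by simp
    have "(A - F) *\<^sub>v w = ((A - F) * minv (A - F)) *\<^sub>v v"
      unfolding w_def using AF AFinv(1) v_carrier by simp
    then have "A *\<^sub>v w - F *\<^sub>v w = v"
      using A F AFinv(2) w v_carrier by (simp add: minus_mult_distrib_mat_vec)
    then have Aw: "A *\<^sub>v w = v + F *\<^sub>v w"
      using A F w v_carrier by (intro eq_vecI) auto
    have "w = (minv A * A) *\<^sub>v w"
      using Ainv(3) w by simp
    also have "\<dots> = minv A *\<^sub>v v + minv A *\<^sub>v (F *\<^sub>v w)"
      using A F Ainv(1) w v_carrier by (simp add: Aw mult_add_distrib_mat_vec)
    finally have "w = minv A *\<^sub>v v + minv A *\<^sub>v (F *\<^sub>v w)" .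
    moreover have "minv A *\<^sub>v v \<in> EK (Suc t) A G" "minv A *\<^sub>v (F *\<^sub>v w) \<in> EK (Suc t) A G"
      using v F_in[OF w] minv_mult_EK_subset_EK_Suc by auto
    ultimately have "w \<in> EK (Suc t) A G"
      using add_in_K by metis
    then show "minv (A - F) *\<^sub>v v \<in> EK (Suc t) A G"
      unfolding w_def .
  qed
qed

lemma newton_eksm_step_subset_EK:
  assumes X: "X \<in> carrier_mat n n" "mat_range X \<subseteq> EK s A G" and s: "0 < s"
    and B: "B \<in> carrier_mat n p" and inv: "invertible_mat (A - X * B * B\<^sup>T)"
    and W: "W \<in> carrier_mat n d" "mat_range W = EK m (A - X * B * B\<^sup>T) (hcat G (X * B))"
    and Y: "Y \<in> carrier_mat d d"
  shows "X + c \<cdot>\<^sub>m (W * Y * W\<^sup>T - X) \<in> carrier_mat n n"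
    and "mat_range (X + c \<cdot>\<^sub>m (W * Y * W\<^sup>T - X)) \<subseteq> EK (s + m) A G"
proof -
  have XB: "X * B \<in> carrier_mat n p" "mat_range (X * B) \<subseteq> EK s A G"
    using X mat_range_mult_subset[OF X(1) B] B by auto
  have XBB: "X * B * B\<^sup>T \<in> carrier_mat n n" "mat_range (X * B * B\<^sup>T) \<subseteq> EK s A G"
    using XB mat_range_mult_subset[of "X * B" n p "B\<^sup>T" n] B by auto
  note hcat = mat_range_hcat_subset[OF EK_mat_carrier[OF A G, of s] G, folded EK_def,
      OF XB(1) mat_range_subset_EK[OF s] XB(2)]
  have WK: "mat_range W \<subseteq> EK (s + m) A G"
    unfolding W(2) using EK_subset_EK_of_shifts[OF minus_carrier_mat[OF XBB(1)] inv hcat]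
      perturbed_mult_EK_subset_EK_Suc[OF XBB inv] by blast
  have WYW: "W * Y * W\<^sup>T \<in> carrier_mat n n"
    using W Y by auto
  have "mat_range (W * Y * W\<^sup>T) \<subseteq> mat_range W"
    using mat_range_mult_subset[of "W * Y" n d "W\<^sup>T" n] mat_range_mult_subset[OF W(1) Y] W Y
    by auto
  then have "mat_range (W * Y * W\<^sup>T) \<subseteq> mat_range (EK_mat (s + m) A G)"
    using WK EK_def by auto
  moreover have "mat_range X \<subseteq> mat_range (EK_mat (s + m) A G)"
    using X(2) EK_mono[of s "s + m"] EK_def by auto
  ultimately show "mat_range (X + c \<cdot>\<^sub>m (W * Y * W\<^sup>T - X)) \<subseteq> EK (s + m) A G"
    unfolding EK_def
    using EK_mat_carrier[OF A G, of "s + m"] X(1) WYW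
    by (meson minus_carrier_mat smult_carrier_mat mat_range_add_subset mat_range_smult_subset
        mat_range_minus_subset)
  show "X + c \<cdot>\<^sub>m (W * Y * W\<^sup>T - X) \<in> carrier_mat n n"
    using X(1) WYW by auto
qed

lemma newton_eksm_iterates_subset_EK:
  assumes B: "B \<in> carrier_mat n p" and X0: "X 0 = 0\<^sub>m n n"
    and nonsing: "\<And>k. invertible_mat (A - X k * B * B\<^sup>T)"
    and W: "\<And>k. orth_basis n (W (Suc k)) (EK (m (Suc k)) (A - X k * B * B\<^sup>T) (hcat G (X k * B)))"
    and Y: "\<And>k. Y (Suc k) \<in> carrier_mat (dim_col (W (Suc k))) (dim_col (W (Suc k)))"
    and step: "\<And>k. X (Suc k) = X k + c k \<cdot>\<^sub>m (W (Suc k) * Y (Suc k) * (W (Suc k))\<^sup>T - X k)"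
  shows "X k \<in> carrier_mat n n \<and> mat_range (X k) \<subseteq> EK (1 + (\<Sum>j=1..k. m j)) A G"
proof (induction k)
  case 0
  show ?case
    using X0 mat_range_zero_mat_subset[OF EK_mat_carrier[OF A G]] EK_def by simp
next
  case (Suc k)
  have W_k: "W (Suc k) \<in> carrier_mat n (dim_col (W (Suc k)))"
    "mat_range (W (Suc k)) = EK (m (Suc k)) (A - X k * B * B\<^sup>T) (hcat G (X k * B))"
    using W[of k] unfolding orth_basis_def by auto
  show ?case
    using newton_eksm_step_subset_EK[OF conjunct1[OF Suc.IH] conjunct2[OF Suc.IH] _ B nonsing W_k Y]
    by (simp add: step)
qed

end

theorem corollary1:
  fixes n p q :: nat
    and A B C :: "real mat"
    and X Xt W Y Z :: "nat \<Rightarrow> real mat"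
    and m :: "nat \<Rightarrow> nat"
    and lam :: "nat \<Rightarrow> real"
  assumes A: "A \<in> carrier_mat n n" "invertible_mat A"
    and B: "B \<in> carrier_mat n p"
    and C: "C \<in> carrier_mat q n"
    and X0: "X 0 = 0\<^sub>m n n"
    and nonsing: "\<And>k. invertible_mat (A - X k * B * B\<^sup>T)"
    and W: "\<And>k. orth_basis n (W (Suc k))
               (EK (m (Suc k)) (A - X k * B * B\<^sup>T) (hcat C\<^sup>T (X k * B)))"
    and Y: "\<And>k. Y (Suc k) \<in> carrier_mat (dim_col (W (Suc k))) (dim_col (W (Suc k)))"
    and Xt: "\<And>k. Xt (Suc k) = W (Suc k) * Y (Suc k) * (W (Suc k))\<^sup>T"
    and Z: "\<And>k. Z k = Xt (Suc k) - X k"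
    and lam: "\<And>k. lam k > 0"
    and Xnext: "\<And>k. X (Suc k) = X k + lam k \<cdot>\<^sub>m Z k"
  shows "\<forall>k. \<exists>mb::nat. mb \<le> (\<Sum>j=1..Suc k. m j) + 2
            \<and> mat_range (X (Suc k)) \<subseteq> EK mb A C\<^sup>T
            \<and> (\<forall>r P. P \<in> carrier_mat n r \<and> X (Suc k) = P * P\<^sup>T
                    \<longrightarrow> mat_range P \<subseteq> EK mb A C\<^sup>T)"
proof
  fix k
  have CT: "C\<^sup>T \<in> carrier_mat n q"
    using C by simp
  have step: "X (Suc i) = X i + lam i \<cdot>\<^sub>m (W (Suc i) * Y (Suc i) * (W (Suc i))\<^sup>T - X i)" for i
    using Xnext Z Xt by simp
  have range: "mat_range (X (Suc k)) \<subseteq> EK (1 + (\<Sum>j=1..Suc k. m j)) A C\<^sup>T"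
    using newton_eksm_iterates_subset_EK[where k = "Suc k", OF A CT B X0 nonsing W Y step] by blast
  then have "mat_range P \<subseteq> EK (1 + (\<Sum>j=1..Suc k. m j)) A C\<^sup>T"
    if "P \<in> carrier_mat n r" "X (Suc k) = P * P\<^sup>T" for r P
    using mat_range_mult_transpose_self[OF that(1)] that(2) by simp
  then show "\<exists>mb. mb \<le> (\<Sum>j=1..Suc k. m j) + 2
      \<and> mat_range (X (Suc k)) \<subseteq> EK mb A C\<^sup>T
      \<and> (\<forall>r P. P \<in> carrier_mat n r \<and> X (Suc k) = P * P\<^sup>T \<longrightarrow> mat_range P \<subseteq> EK mb A C\<^sup>T)"
    using range by (intro exI[of _ "1 + (\<Sum>j=1..Suc k. m j)"]) auto
qed

end
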